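(* Let $n\ge1$, $\alpha_1,\dots,\alpha_n\ge0$, and let $U:[0,\infty)\to\mathbb{R}$ be continuous, strictly increasing, concave and differentiable with $U(0)=0$. Let $\varepsilon>0$ be such that $\varepsilon/n$ lies in the range of $U$, and suppose $K:=1/U^{-1}(\varepsilon/n)$ is a positive integer. Let $\mathrm{OPT}$ be the maximum of $\sum_{i=1}^n U(\alpha_i+x_i)$ over real $x_i\ge0$ with $\sum_i x_i=1$, and let $\mathrm{OPT}_K$ be the maximum of the same objective over $x_i\in\{0,1/K,2/K,\dots\}$ with $\sum_i x_i\le1$. Then $\mathrm{OPT}-\mathrm{OPT}_K\le\varepsilon$; that is, an optimal solution of the $K$-discretized problem is an additive $\varepsilon$-approximation of the optimum of the continuous problem.
   Context: The continuous common goods problem: one agent with one unit of infinitely divisible resource and $n$ goods with existing resource levels $\alpha_i$, utility $\sum_i U(\alpha_i+x_i)$. The $K$-discretized version: the agent's unit of resource consists of $K$ atomic units of volume $1/K$. *)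

theory Defs
  imports "HOL-Analysis.Analysis"
begin

definition cg_obj :: "(real \<Rightarrow> real) \<Rightarrow> (nat \<Rightarrow> real) \<Rightarrow> nat \<Rightarrow> (nat \<Rightarrow> real) \<Rightarrow> real" where
  "cg_obj U \<alpha> n x = (\<Sum>i<n. U (\<alpha> i + x i))"

definition cont_feasible :: "nat \<Rightarrow> (nat \<Rightarrow> real) \<Rightarrow> bool" where
  "cont_feasible n x \<longleftrightarrow> (\<forall>i<n. x i \<ge> 0) \<and> (\<Sum>i<n. x i) = 1"

definition disc_feasible :: "nat \<Rightarrow> nat \<Rightarrow> (nat \<Rightarrow> real) \<Rightarrow> bool" where
  "disc_feasible K n x \<longleftrightarrow> (\<forall>i<n. \<exists>k::nat. x i = real k / real K) \<and> (\<Sum>i<n. x i) \<le> 1"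

text \<open>Optimal values (the maxima are attained; Sup equals the maximum).\<close>
definition OPT :: "(real \<Rightarrow> real) \<Rightarrow> (nat \<Rightarrow> real) \<Rightarrow> nat \<Rightarrow> real" where
  "OPT U \<alpha> n = Sup (cg_obj U \<alpha> n ` {x. cont_feasible n x})"

definition OPT_K :: "nat \<Rightarrow> (real \<Rightarrow> real) \<Rightarrow> (nat \<Rightarrow> real) \<Rightarrow> nat \<Rightarrow> real" where
  "OPT_K K U \<alpha> n = Sup (cg_obj U \<alpha> n ` {x. disc_feasible K n x})"

end

theory Submission
  imports Defs
begin

text \<open>Round any continuous feasible allocation down coordinatewise to the grid of multiples of \<open>1/K\<close>. The
  result is feasible for the discretized problem and each coordinate loses at most \<open>1/K\<close>.
  A concave \<open>U\<close> with \<open>U 0 = 0\<close> is subadditive, so the loss in the \<open>i\<close>-th term is at most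
  \<open>U (1/K) = \<epsilon>/n\<close>, and the total loss at most \<open>\<epsilon>\<close>.\<close>

lemma concave_on_subadditive:
  fixes U :: "real \<Rightarrow> real"
  assumes concave: "concave_on {0..} U" and "U 0 = 0" and a: "a \<ge> 0" and d: "d \<ge> 0"
  shows "U (a + d) \<le> U a + U d"
proof (cases "a + d = 0")
  case True
  then have "a = 0" "d = 0" using a d by auto
  then show ?thesis using \<open>U 0 = 0\<close> by simp
next
  case False
  then have s: "a + d > 0" using a d by auto
  define t where "t = d / (a + d)"
  have t: "0 \<le> t" "t \<le> 1" using s a d by (auto simp: t_def field_simps)
  have "t * U (a + d) \<le> U d"
    using concave_onD[OF concave t, of 0 "a + d"] s \<open>U 0 = 0\<close> by (simp add: t_def)
  moreover have "(1 - t) * (a + d) = a" using s by (simp add: t_def field_simps)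
  then have "(1 - t) * U (a + d) \<le> U a"
    using concave_onD[OF concave, of "1 - t" 0 "a + d"] t s \<open>U 0 = 0\<close> by simp
  ultimately show ?thesis by (simp add: algebra_simps)
qed

definition grid_floor :: "nat \<Rightarrow> real \<Rightarrow> real" where
  "grid_floor K t = real (nat \<lfloor>real K * t\<rfloor>) / real K"

lemma grid_floor_bounds:
  assumes "K > 0" and "t \<ge> 0"
  shows "0 \<le> grid_floor K t" "grid_floor K t \<le> t" "t - grid_floor K t \<le> 1 / real K"
proof -
  have K: "real K > 0" using \<open>K > 0\<close> by simp
  have eq: "grid_floor K t = real_of_int \<lfloor>real K * t\<rfloor> / real K"
    using \<open>t \<ge> 0\<close> by (simp add: grid_floor_def)
  show "0 \<le> grid_floor K t" using \<open>t \<ge> 0\<close> by (simp add: eq)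
  show "grid_floor K t \<le> t" using K by (simp add: eq field_simps)
  have "t - grid_floor K t = (real K * t - real_of_int \<lfloor>real K * t\<rfloor>) / real K"
    using K by (simp add: eq field_simps)
  also have "\<dots> \<le> 1 / real K" using K by (intro divide_right_mono) linarith+
  finally show "t - grid_floor K t \<le> 1 / real K" .
qed

lemma disc_feasible_grid_floor:
  assumes "K > 0" and "cont_feasible n x"
  shows "disc_feasible K n (\<lambda>i. grid_floor K (x i))"
  unfolding disc_feasible_def
proof
  show "\<forall>i<n. \<exists>k::nat. grid_floor K (x i) = real k / real K" by (auto simp: grid_floor_def)
  have "(\<Sum>i<n. grid_floor K (x i)) \<le> (\<Sum>i<n. x i)"
    using assms grid_floor_bounds(2) by (intro sum_mono) (auto simp: cont_feasible_def)
  then show "(\<Sum>i<n. grid_floor K (x i)) \<le> 1" using assms by (simp add: cont_feasible_def)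
qed

lemma disc_feasible_bounds:
  assumes "disc_feasible K n x" and "i < n"
  shows "0 \<le> x i" "x i \<le> 1"
proof -
  have nonneg: "\<forall>j<n. 0 \<le> x j" using assms(1) unfolding disc_feasible_def by force
  then show "0 \<le> x i" using assms(2) by simp
  have "x i \<le> (\<Sum>j<n. x j)"
    using nonneg assms(2) by (intro member_le_sum) auto
  then show "x i \<le> 1" using assms(1) unfolding disc_feasible_def by simp
qed

lemma bdd_above_cg_obj_disc_feasible:
  assumes "mono_on {0..} U" and "\<forall>i<n. \<alpha> i \<ge> 0"
  shows "bdd_above (cg_obj U \<alpha> n ` {x. disc_feasible K n x})"
proof (rule bdd_aboveI2)
  fix x assume "x \<in> {x. disc_feasible K n x}"
  then have "disc_feasible K n x" by simp
  then show "cg_obj U \<alpha> n x \<le> (\<Sum>i<n. U (\<alpha> i + 1))"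
    unfolding cg_obj_def using assms disc_feasible_bounds
    by (intro sum_mono) (auto intro!: mono_onD[OF assms(1)])
qed

lemma cg_obj_le_grid_floor:
  assumes "mono_on {0..} U" and "concave_on {0..} U" and "U 0 = 0"
    and "\<forall>i<n. \<alpha> i \<ge> 0" and "K > 0" and "cont_feasible n x"
  shows "cg_obj U \<alpha> n x \<le> cg_obj U \<alpha> n (\<lambda>i. grid_floor K (x i)) + real n * U (1 / real K)"
proof -
  have "U (\<alpha> i + x i) \<le> U (\<alpha> i + grid_floor K (x i)) + U (1 / real K)" if "i < n" for i
  proof -
    let ?y = "grid_floor K (x i)"
    have x: "x i \<ge> 0" using assms(6) that by (simp add: cont_feasible_def)
    note y = grid_floor_bounds[OF \<open>K > 0\<close> x]
    have "U (\<alpha> i + x i) = U ((\<alpha> i + ?y) + (x i - ?y))" by simp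
    also have "\<dots> \<le> U (\<alpha> i + ?y) + U (x i - ?y)"
      using assms(4) that y by (intro concave_on_subadditive[OF assms(2,3)]) auto
    also have "U (x i - ?y) \<le> U (1 / real K)"
      using y by (intro mono_onD[OF assms(1)]) auto
    finally show ?thesis by simp
  qed
  then have "cg_obj U \<alpha> n x \<le> (\<Sum>i<n. U (\<alpha> i + grid_floor K (x i)) + U (1 / real K))"
    unfolding cg_obj_def by (intro sum_mono) auto
  then show ?thesis by (simp add: cg_obj_def sum.distrib)
qed

theorem lemma3:
  fixes n K :: nat and \<alpha> :: "nat \<Rightarrow> real" and U :: "real \<Rightarrow> real" and \<epsilon> :: real
  assumes "n \<ge> 1"
    and "\<forall>i<n. \<alpha> i \<ge> 0"
    and "continuous_on {0..} U"
    and "strict_mono_on {0..} U"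
    and "concave_on {0..} U"
    and "U differentiable_on {0..}"
    and "U 0 = 0"
    and "\<epsilon> > 0"
    and "K > 0"
    and "U (1 / real K) = \<epsilon> / real n"
  shows "OPT U \<alpha> n - OPT_K K U \<alpha> n \<le> \<epsilon>"
proof -
  have mono: "mono_on {0..} U" using assms(4) by (rule strict_mono_on_imp_mono_on)
  have "cont_feasible n (\<lambda>i. if i = 0 then 1 else 0)"
    using assms(1) by (simp add: cont_feasible_def)
  then have nonempty: "{x. cont_feasible n x} \<noteq> {}" by blast
  have "cg_obj U \<alpha> n x \<le> OPT_K K U \<alpha> n + \<epsilon>" if "cont_feasible n x" for x
  proof -
    have "cg_obj U \<alpha> n (\<lambda>i. grid_floor K (x i)) \<le> OPT_K K U \<alpha> n"
      unfolding OPT_K_def using disc_feasible_grid_floor[OF assms(9) that]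
      by (intro cSUP_upper bdd_above_cg_obj_disc_feasible[OF mono assms(2)]) auto
    moreover have "real n * U (1 / real K) = \<epsilon>" using assms(1,10) by simp
    ultimately show ?thesis
      using cg_obj_le_grid_floor[OF mono assms(5,7,2,9) that] by simp
  qed
  then have "OPT U \<alpha> n \<le> OPT_K K U \<alpha> n + \<epsilon>"
    unfolding OPT_def using nonempty by (intro cSUP_least) auto
  then show ?thesis by simp
qed

end
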